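(* Let $a_2,a_5$ be real constants, not both zero, and $k_1,k_2,k_3$ real constants. On the region where $r=\sqrt{x^2+y^2}>0$ and $a_2y-a_5x\neq0$, let $$V=\frac{k_1}{(a_2y-a_5x)^2}+\frac{k_2}{r}+\frac{k_3(a_2x+a_5y)}{r(a_2y-a_5x)^2}.$$ With $L=x\dot y-y\dot x$, the function $$J=(a_2\dot x+a_5\dot y)L^2+\frac{2k_1r^2}{(a_2y-a_5x)^2}(a_2\dot x+a_5\dot y)-\frac{k_2(a_2y-a_5x)}{r}L+\frac{k_3r}{a_2y-a_5x}(a_2\dot y-a_5\dot x)-\frac{k_3(a_2x+a_5y)}{r(a_2y-a_5x)}L+\frac{2k_3(a_2x+a_5y)r}{(a_2y-a_5x)^2}(a_2\dot x+a_5\dot y)$$ is a first integral of $\ddot x=-V_{,x}$, $\ddot y=-V_{,y}$.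
   Context: A first integral is a function of $(t,x,y,\dot x,\dot y)$ whose total time derivative vanishes along every solution of the given equations of motion. *)

theory Defs
  imports Complex_Main
begin

definition Vpot :: "real \<Rightarrow> real \<Rightarrow> real \<Rightarrow> real \<Rightarrow> real \<Rightarrow> real \<Rightarrow> real \<Rightarrow> real" where
  "Vpot a2 a5 k1 k2 k3 x y =
     k1 / (a2*y - a5*x)^2 + k2 / sqrt (x^2 + y^2)
     + k3 * (a2*x + a5*y) / (sqrt (x^2 + y^2) * (a2*y - a5*x)^2)"

definition Jint :: "real \<Rightarrow> real \<Rightarrow> real \<Rightarrow> real \<Rightarrow> real \<Rightarrow> real \<Rightarrow> real \<Rightarrow> real \<Rightarrow> real \<Rightarrow> real" where
  "Jint a2 a5 k1 k2 k3 x y vx vy =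
     (let r = sqrt (x^2 + y^2); L = x*vy - y*vx; D = a2*y - a5*x; P = a2*x + a5*y in
      (a2*vx + a5*vy) * L^2
      + 2*k1*r^2 / D^2 * (a2*vx + a5*vy)
      - k2*D / r * L
      + k3*r / D * (a2*vy - a5*vx)
      - k3*P / (r*D) * L
      + 2*k3*P*r / D^2 * (a2*vx + a5*vy))"

end

theory Submission
  imports Defs
begin

text \<open>Along a solution, dJ/dt is the polynomial expression obtained by the chain rule in
  x, y, the velocities, r, D = a2 y - a5 x and their inverses, with the accelerations
  replaced by the negative gradient of V. Modulo r^2 = x^2 + y^2,
  r (1/r) = 1 and D (1/D) = 1 it is identically zero, an ideal
  membership that a Gr\<ouml>bner basis computation certifies.\<close>

definition Vpot_dx :: "real \<Rightarrow> real \<Rightarrow> real \<Rightarrow> real \<Rightarrow> real \<Rightarrow> real \<Rightarrow> real \<Rightarrow> real" where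
  "Vpot_dx a2 a5 k1 k2 k3 x y =
     (let r = sqrt (x^2 + y^2); D = a2*y - a5*x; P = a2*x + a5*y in
      2*k1*a5 / D^3 - k2*x / r^3
      + k3 * (a2 / (r*D^2) - P*x / (r^3*D^2) + 2*a5*P / (r*D^3)))"

definition Vpot_dy :: "real \<Rightarrow> real \<Rightarrow> real \<Rightarrow> real \<Rightarrow> real \<Rightarrow> real \<Rightarrow> real \<Rightarrow> real" where
  "Vpot_dy a2 a5 k1 k2 k3 x y =
     (let r = sqrt (x^2 + y^2); D = a2*y - a5*x; P = a2*x + a5*y in
      - 2*k1*a2 / D^3 - k2*y / r^3
      + k3 * (a5 / (r*D^2) - P*y / (r^3*D^2) - 2*a2*P / (r*D^3)))"

lemma has_real_derivative_Vpot_x: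
  fixes a2 a5 k1 k2 k3 x y :: real
  assumes "x^2 + y^2 > 0" and "a2*y - a5*x \<noteq> 0"
  shows "((\<lambda>u. Vpot a2 a5 k1 k2 k3 u y) has_real_derivative Vpot_dx a2 a5 k1 k2 k3 x y) (at x)"
proof -
  define r where "r = sqrt (x^2 + y^2)"
  define D where "D = a2*y - a5*x"
  have "r > 0" "D \<noteq> 0" using assms by (simp_all add: r_def D_def)
  show ?thesis
    unfolding Vpot_def
    apply (rule derivative_eq_intros refl | use assms in force)+
    using \<open>r > 0\<close> \<open>D \<noteq> 0\<close>
    by (simp add: Vpot_dx_def flip: r_def D_def) (simp add: field_simps eval_nat_numeral)
qed

lemma has_real_derivative_Vpot_y:
  fixes a2 a5 k1 k2 k3 x y :: real
  assumes "x^2 + y^2 > 0" and "a2*y - a5*x \<noteq> 0"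
  shows "((\<lambda>u. Vpot a2 a5 k1 k2 k3 x u) has_real_derivative Vpot_dy a2 a5 k1 k2 k3 x y) (at y)"
proof -
  define r where "r = sqrt (x^2 + y^2)"
  define D where "D = a2*y - a5*x"
  have "r > 0" "D \<noteq> 0" using assms by (simp_all add: r_def D_def)
  show ?thesis
    unfolding Vpot_def
    apply (rule derivative_eq_intros refl | use assms in force)+
    using \<open>r > 0\<close> \<open>D \<noteq> 0\<close>
    by (simp add: Vpot_dy_def flip: r_def D_def) (simp add: field_simps eval_nat_numeral)
qed

lemma Jint_conserved:
  fixes a2 a5 k1 k2 k3 t :: real and x y vx vy :: "real \<Rightarrow> real"
  assumes "(x has_real_derivative vx t) (at t)" and "(y has_real_derivative vy t) (at t)"
    and "(vx has_real_derivative - Vpot_dx a2 a5 k1 k2 k3 (x t) (y t)) (at t)"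
    and "(vy has_real_derivative - Vpot_dy a2 a5 k1 k2 k3 (x t) (y t)) (at t)"
    and "(x t)^2 + (y t)^2 > 0" and "a2 * y t - a5 * x t \<noteq> 0"
  shows "((\<lambda>s. Jint a2 a5 k1 k2 k3 (x s) (y s) (vx s) (vy s)) has_real_derivative 0) (at t)"
proof -
  define r where "r = sqrt ((x t)^2 + (y t)^2)"
  define D where "D = a2 * y t - a5 * x t"
  have "r > 0" using assms(5) by (simp add: r_def)
  then have r_inverse: "r * inverse r = 1" by simp
  have D_inverse: "D * inverse D = 1" using assms(6) by (simp add: D_def)
  have two_minus_one: "(2::nat) - Suc 0 = 1" by simp
  have r_squared: "r^2 = (x t)^2 + (y t)^2" using assms(5) by (simp add: r_def)
  show ?thesis
    unfolding Jint_def Let_def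
    apply (rule derivative_eq_intros refl assms(1-4) | use assms(5,6) in force)+
    apply (simp only: Vpot_dx_def Vpot_dy_def Let_def flip: r_def D_def)
    \<comment> \<open>Division is rewritten into inverses so that the Gr\<ouml>bner basis method treats
      inverse r and inverse D as ring variables.\<close>
    apply (simp only: divide_inverse inverse_mult_distrib power_inverse[symmetric]
        mult_zero_left mult_zero_right add_0 add_0_right diff_zero zero_diff mult_1_left
        mult_1_right of_nat_numeral power_one_right two_minus_one)
    using r_inverse D_inverse r_squared D_def by algebra
qed

theorem mainTheorem7:
  fixes a2 a5 k1 k2 k3 :: real
    and x y vx vy ax ay :: "real \<Rightarrow> real"
    and S :: "real set"
  assumes "a2 \<noteq> 0 \<or> a5 \<noteq> 0"
    and "open S"
    and "\<forall>t\<in>S. (x has_real_derivative vx t) (at t)"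
    and "\<forall>t\<in>S. (y has_real_derivative vy t) (at t)"
    and "\<forall>t\<in>S. (vx has_real_derivative ax t) (at t)"
    and "\<forall>t\<in>S. (vy has_real_derivative ay t) (at t)"
    and "\<forall>t\<in>S. sqrt ((x t)^2 + (y t)^2) > 0 \<and> a2 * y t - a5 * x t \<noteq> 0"
    and "\<forall>t\<in>S. ((\<lambda>u. Vpot a2 a5 k1 k2 k3 u (y t)) has_real_derivative (- ax t)) (at (x t))"
    and "\<forall>t\<in>S. ((\<lambda>u. Vpot a2 a5 k1 k2 k3 (x t) u) has_real_derivative (- ay t)) (at (y t))"
  shows "\<forall>t\<in>S. ((\<lambda>s. Jint a2 a5 k1 k2 k3 (x s) (y s) (vx s) (vy s))
                   has_real_derivative 0) (at t)"
proof
  fix t assume "t \<in> S"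
  then have pos: "(x t)^2 + (y t)^2 > 0" and nonzero: "a2 * y t - a5 * x t \<noteq> 0"
    using assms(7) by auto
  have "- ax t = Vpot_dx a2 a5 k1 k2 k3 (x t) (y t)"
    using \<open>t \<in> S\<close> assms(8) has_real_derivative_Vpot_x[OF pos nonzero] DERIV_unique by blast
  with \<open>t \<in> S\<close> assms(5)
  have "(vx has_real_derivative - Vpot_dx a2 a5 k1 k2 k3 (x t) (y t)) (at t)" by (metis minus_minus)
  moreover have "- ay t = Vpot_dy a2 a5 k1 k2 k3 (x t) (y t)"
    using \<open>t \<in> S\<close> assms(9) has_real_derivative_Vpot_y[OF pos nonzero] DERIV_unique by blast
  with \<open>t \<in> S\<close> assms(6)
  have "(vy has_real_derivative - Vpot_dy a2 a5 k1 k2 k3 (x t) (y t)) (at t)" by (metis minus_minus)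
  ultimately show "((\<lambda>s. Jint a2 a5 k1 k2 k3 (x s) (y s) (vx s) (vy s)) has_real_derivative 0) (at t)"
    using \<open>t \<in> S\<close> assms(3,4) Jint_conserved pos nonzero by blast
qed

end
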